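(* Let $\Gamma$ be a distance-regular graph with classical parameters $(D,b,\alpha,\beta)$ such that $b\ge2$, $b-1\ge\alpha\ge1$ and $D\ge3$, geometric with respect to a set $\mathcal C$ of Delsarte cliques (so $\Gamma$ is the point graph of the partial linear space $(V(\Gamma),\mathcal C,\in)$; members of $\mathcal C$ are called lines). Let $r=[D]$ and assume $\Gamma$ satisfies the dual Pasch axiom. Then every two adjacent vertices $x,y$ lie in a unique assembly $M_{x,y}$, which has exactly $\alpha r+1$ vertices; consequently $\beta\ge\alpha r$, and each vertex lies in exactly $\frac{\beta}{\alpha}$ assemblies.
   Context: Distance-regular graph with intersection numbers $b_i,c_i$, valency $k=b_0$. For integer $b\ne1$, $[j]=\frac{b^j-1}{b-1}$. Classical parameters $(D,b,\alpha,\beta)$: diameter $D$, $b_i=([D]-[i])(\beta-\alpha[i])$, $c_i=[i](1+\alpha[i-1])$. A Delsarte clique is a clique with $1+\frac{k}{-\theta_{\min}}$ vertices, $\theta_{\min}$ the smallest adjacency eigenvalue; geometric with respect to $\mathcal C$ means every edge lies in exactly one member of $\mathcal C$. Dual Pasch axiom: for any two adjacent vertices $x,y$, the set of common neighbours of $x$ and $y$ not on the line through $x$ and $y$ is a clique. An assembly is a maximal clique of $\Gamma$ not in $\mathcal C$. *)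

theory Defs
  imports Main "HOL-Library.Disjoint_Sets" Complex_Main
begin

definition simple_graph :: "'a set \<Rightarrow> ('a \<Rightarrow> 'a \<Rightarrow> bool) \<Rightarrow> bool" where
  "simple_graph V E \<longleftrightarrow> finite V \<and> V \<noteq> {} \<and>
     (\<forall>x y. E x y \<longrightarrow> x \<in> V \<and> y \<in> V) \<and>
     (\<forall>x y. E x y \<longrightarrow> E y x) \<and> (\<forall>x. \<not> E x x)"

fun walk :: "('a \<Rightarrow> 'a \<Rightarrow> bool) \<Rightarrow> nat \<Rightarrow> 'a \<Rightarrow> 'a \<Rightarrow> bool" where
  "walk E 0 x y = (x = y)"
| "walk E (Suc n) x y = (\<exists>z. walk E n x z \<and> E z y)"

definition gdist :: "('a \<Rightarrow> 'a \<Rightarrow> bool) \<Rightarrow> 'a \<Rightarrow> 'a \<Rightarrow> nat" where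
  "gdist E x y = (LEAST n. walk E n x y)"

definition connected_graph :: "'a set \<Rightarrow> ('a \<Rightarrow> 'a \<Rightarrow> bool) \<Rightarrow> bool" where
  "connected_graph V E \<longleftrightarrow> (\<forall>x\<in>V. \<forall>y\<in>V. \<exists>n. walk E n x y)"

definition diameter :: "'a set \<Rightarrow> ('a \<Rightarrow> 'a \<Rightarrow> bool) \<Rightarrow> nat" where
  "diameter V E = Max {gdist E x y | x y. x \<in> V \<and> y \<in> V}"

definition distance_regular ::
  "'a set \<Rightarrow> ('a \<Rightarrow> 'a \<Rightarrow> bool) \<Rightarrow> (nat \<Rightarrow> nat) \<Rightarrow> (nat \<Rightarrow> nat) \<Rightarrow> bool" where
  "distance_regular V E bi ci \<longleftrightarrow> simple_graph V E \<and> connected_graph V E \<and>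
     (\<forall>x\<in>V. \<forall>y\<in>V. \<forall>i. gdist E x y = i \<longrightarrow>
        ci i = card {z\<in>V. E y z \<and> gdist E x z + 1 = i} \<and>
        bi i = card {z\<in>V. E y z \<and> gdist E x z = i + 1})"

definition gbr :: "int \<Rightarrow> nat \<Rightarrow> real" where
  "gbr b j = (real_of_int b ^ j - 1) / (real_of_int b - 1)"

definition classical_parameters ::
  "'a set \<Rightarrow> ('a \<Rightarrow> 'a \<Rightarrow> bool) \<Rightarrow> (nat \<Rightarrow> nat) \<Rightarrow> (nat \<Rightarrow> nat) \<Rightarrow>
   nat \<Rightarrow> int \<Rightarrow> real \<Rightarrow> real \<Rightarrow> bool" where
  "classical_parameters V E bi ci D b \<alpha> \<beta> \<longleftrightarrow>
     distance_regular V E bi ci \<and> diameter V E = D \<and> b \<noteq> 1 \<and>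
     (\<forall>i\<le>D. real (bi i) = (gbr b D - gbr b i) * (\<beta> - \<alpha> * gbr b i) \<and>
             real (ci i) = gbr b i * (1 + \<alpha> * gbr b (i - 1)))"

definition adj_eigenvalue :: "'a set \<Rightarrow> ('a \<Rightarrow> 'a \<Rightarrow> bool) \<Rightarrow> real \<Rightarrow> bool" where
  "adj_eigenvalue V E \<theta> \<longleftrightarrow> (\<exists>f :: 'a \<Rightarrow> real. (\<exists>x\<in>V. f x \<noteq> 0) \<and>
      (\<forall>x\<in>V. (\<Sum>y\<in>{y\<in>V. E x y}. f y) = \<theta> * f x))"

definition min_eigenvalue :: "'a set \<Rightarrow> ('a \<Rightarrow> 'a \<Rightarrow> bool) \<Rightarrow> real" where
  "min_eigenvalue V E = Min {\<theta>. adj_eigenvalue V E \<theta>}"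

definition is_clique :: "'a set \<Rightarrow> ('a \<Rightarrow> 'a \<Rightarrow> bool) \<Rightarrow> 'a set \<Rightarrow> bool" where
  "is_clique V E C \<longleftrightarrow> C \<subseteq> V \<and> (\<forall>x\<in>C. \<forall>y\<in>C. x \<noteq> y \<longrightarrow> E x y)"

definition maximal_clique :: "'a set \<Rightarrow> ('a \<Rightarrow> 'a \<Rightarrow> bool) \<Rightarrow> 'a set \<Rightarrow> bool" where
  "maximal_clique V E C \<longleftrightarrow> is_clique V E C \<and> (\<forall>C'. is_clique V E C' \<and> C \<subseteq> C' \<longrightarrow> C' = C)"

text \<open>Delsarte clique: a clique with 1 + k/(-\<theta>_min) vertices, k the valency.\<close>
definition delsarte_clique ::
  "'a set \<Rightarrow> ('a \<Rightarrow> 'a \<Rightarrow> bool) \<Rightarrow> nat \<Rightarrow> 'a set \<Rightarrow> bool" where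
  "delsarte_clique V E k C \<longleftrightarrow> is_clique V E C \<and>
     real (card C) = 1 + real k / (- min_eigenvalue V E)"

definition geometric ::
  "'a set \<Rightarrow> ('a \<Rightarrow> 'a \<Rightarrow> bool) \<Rightarrow> nat \<Rightarrow> 'a set set \<Rightarrow> bool" where
  "geometric V E k \<C> \<longleftrightarrow> (\<forall>C\<in>\<C>. delsarte_clique V E k C) \<and>
     (\<forall>x y. E x y \<longrightarrow> (\<exists>!C. C \<in> \<C> \<and> x \<in> C \<and> y \<in> C))"

definition line_through :: "'a set set \<Rightarrow> 'a \<Rightarrow> 'a \<Rightarrow> 'a set" where
  "line_through \<C> x y = (THE C. C \<in> \<C> \<and> x \<in> C \<and> y \<in> C)"

definition dual_pasch ::
  "'a set \<Rightarrow> ('a \<Rightarrow> 'a \<Rightarrow> bool) \<Rightarrow> 'a set set \<Rightarrow> bool" where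
  "dual_pasch V E \<C> \<longleftrightarrow> (\<forall>x y. E x y \<longrightarrow>
     is_clique V E {z\<in>V. E x z \<and> E y z \<and> z \<notin> line_through \<C> x y})"

definition assembly ::
  "'a set \<Rightarrow> ('a \<Rightarrow> 'a \<Rightarrow> bool) \<Rightarrow> 'a set set \<Rightarrow> 'a set \<Rightarrow> bool" where
  "assembly V E \<C> M \<longleftrightarrow> maximal_clique V E M \<and> M \<notin> \<C>"

end

theory Submission
  imports Defs "HOL-Computational_Algebra.Polynomial"
begin

text \<open>Write \<open>r = [D]\<close>. The sphere sums of an eigenfunction of a distance-regular graph are the
  values at the eigenvalue of the distance polynomials; for classical parameters these have a
  Sturm-type sign pattern below \<open>-r\<close>, while an explicit radial eigenfunction has eigenvalue
  \<open>-r\<close>. So \<open>-r\<close> is the smallest eigenvalue, the lines are cliques of size \<open>\<beta> + 1\<close>,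
  every vertex lies on \<open>r\<close> lines, every \<open>(-r)\<close>-eigenfunction sums to zero on each line, and
  hence a vertex adjacent to a line is adjacent to exactly \<open>1 + \<alpha>\<close> of its points.

  For an edge \<open>x y\<close> on the line \<open>L\<close>, the common neighbours of \<open>x\<close> and \<open>y\<close> off \<open>L\<close> form a
  clique \<open>N\<close> of size \<open>\<alpha> (r - 1)\<close> by the dual Pasch axiom, and the dual Pasch axiom again
  shows that all members of \<open>N\<close> have the same \<open>1 + \<alpha>\<close> neighbours \<open>T\<close> on \<open>L\<close>. Then
  \<open>N \<union> T\<close> is the unique assembly through \<open>x y\<close>, of size \<open>\<alpha> r + 1\<close>; Delsarte's clique
  bound gives \<open>\<alpha> r + 1 \<le> \<beta> + 1\<close>, and the assemblies through a vertex partition its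
  \<open>r \<beta>\<close> neighbours into blocks of size \<open>\<alpha> r\<close>.\<close>

lemma degree_diff_eq_left:
  fixes p q :: "'a::ab_group_add poly"
  shows "degree q < degree p \<Longrightarrow> degree (p - q) = degree p"
  using degree_add_eq_left[of "- q" p] by simp

section \<open>Distances in a connected graph\<close>

locale connected_simple_graph =
  fixes V :: "'a set" and E :: "'a \<Rightarrow> 'a \<Rightarrow> bool"
  assumes simple: "simple_graph V E" and connected: "connected_graph V E"
begin

abbreviation d :: "'a \<Rightarrow> 'a \<Rightarrow> nat" where "d \<equiv> gdist E"
abbreviation nbrs :: "'a \<Rightarrow> 'a set" where "nbrs y \<equiv> {z\<in>V. E y z}"

lemma finite_V: "finite V" and V_ne: "V \<noteq> {}"
  using simple by (simp_all add: simple_graph_def)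

lemma edge_in_V: "E x y \<Longrightarrow> x \<in> V \<and> y \<in> V"
  and edge_sym: "E x y \<Longrightarrow> E y x"
  and edge_irrefl: "\<not> E x x"
  using simple by (simp_all add: simple_graph_def)

lemma walk_gdist: "x \<in> V \<Longrightarrow> y \<in> V \<Longrightarrow> walk E (d x y) x y"
  using connected unfolding gdist_def connected_graph_def by (meson LeastI_ex)

lemma gdist_le: "walk E n x y \<Longrightarrow> d x y \<le> n"
  unfolding gdist_def by (rule Least_le)

lemma gdist_self [simp]: "d x x = 0"
  using gdist_le[of 0 x x] by simp

lemma gdist_eq_0_iff: "x \<in> V \<Longrightarrow> y \<in> V \<Longrightarrow> d x y = 0 \<longleftrightarrow> x = y"
  using walk_gdist[of x y] by auto

lemma gdist_eq_1_iff: "x \<in> V \<Longrightarrow> y \<in> V \<Longrightarrow> d x y = 1 \<longleftrightarrow> E x y"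
proof
  assume "x \<in> V" "y \<in> V" "d x y = 1"
  then show "E x y" using walk_gdist[of x y] by simp
next
  assume "E x y"
  then have "d x y \<le> 1" and "x \<noteq> y" using gdist_le[of 1 x y] edge_irrefl by auto
  then show "d x y = 1" using gdist_eq_0_iff edge_in_V \<open>E x y\<close> by fastforce
qed

lemma gdist_edge: "E x y \<Longrightarrow> d x y = 1"
  using gdist_eq_1_iff edge_in_V by blast

lemma gdist_step: "x \<in> V \<Longrightarrow> E y z \<Longrightarrow> d x z \<le> d x y + 1"
  using walk_gdist[of x y] edge_in_V gdist_le[of "Suc (d x y)" x z] by auto

lemma gdist_pred:
  assumes "x \<in> V" "y \<in> V" "d x y = Suc n"
  obtains z where "z \<in> V" "E z y" "d x z = n"
proof -
  from walk_gdist[of x y] assms obtain z where "walk E n x z" "E z y" by auto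
  with gdist_le[of n x z] gdist_step[of x z y] assms edge_in_V show thesis
    using that by fastforce
qed

lemma gdist_intermediate:
  assumes "x \<in> V" "y \<in> V" "i \<le> d x y"
  obtains z where "z \<in> V" "d x z = i"
  using assms
proof (induction "d x y" arbitrary: y)
  case 0 then show ?case by auto
next
  case (Suc n)
  then obtain z where "z \<in> V" "d x z = n" by (metis gdist_pred)
  then show ?case using Suc by (cases "i = Suc n") auto
qed

lemma sum_nbrs_by_clique_partition:
  assumes cliques: "\<And>M. M \<in> \<M> \<Longrightarrow> is_clique V E M"
    and unique: "\<And>y. E x y \<Longrightarrow> \<exists>!M. M \<in> \<M> \<and> x \<in> M \<and> y \<in> M"
  shows "(\<Sum>t\<in>nbrs x. h t) = (\<Sum>M\<in>{M\<in>\<M>. x \<in> M}. \<Sum>t\<in>M - {x}. h t)"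
proof -
  let ?Mx = "{M\<in>\<M>. x \<in> M}"
  have sub: "M \<subseteq> V" if "M \<in> \<M>" for M using cliques[OF that] by (simp add: is_clique_def)
  then have fin: "finite ?Mx" "\<And>M. M \<in> ?Mx \<Longrightarrow> finite M"
    using finite_V by (auto intro: finite_subset[of _ "Pow V"] finite_subset)
  have clique_edge: "E x y" if "M \<in> ?Mx" "y \<in> M" "y \<noteq> x" for M y
    using that cliques by (auto simp: is_clique_def)
  have partition: "nbrs x = (\<Union>M\<in>?Mx. M - {x})"
  proof (intro equalityI subsetI)
    fix y assume "y \<in> nbrs x"
    then obtain M where "M \<in> \<M>" "x \<in> M" "y \<in> M" using unique by blast
    with \<open>y \<in> nbrs x\<close> edge_irrefl show "y \<in> (\<Union>M\<in>?Mx. M - {x})" by blast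
  next
    fix y assume "y \<in> (\<Union>M\<in>?Mx. M - {x})"
    then show "y \<in> nbrs x" using clique_edge edge_in_V by blast
  qed
  show ?thesis
    unfolding partition
  proof (rule sum.UNION_disjoint)
    show "\<forall>M\<in>?Mx. \<forall>M'\<in>?Mx. M \<noteq> M' \<longrightarrow> (M - {x}) \<inter> (M' - {x}) = {}"
      using clique_edge unique by blast
  qed (use fin in auto)
qed

lemma card_nbrs_by_clique_partition:
  assumes cliques: "\<And>M. M \<in> \<M> \<Longrightarrow> is_clique V E M"
    and unique: "\<And>y. E x y \<Longrightarrow> \<exists>!M. M \<in> \<M> \<and> x \<in> M \<and> y \<in> M"
    and size: "\<And>M. M \<in> \<M> \<Longrightarrow> x \<in> M \<Longrightarrow> real (card M) = s + 1"
  shows "real (card (nbrs x)) = real (card {M\<in>\<M>. x \<in> M}) * s"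
proof -
  have "real (card (nbrs x)) = (\<Sum>M\<in>{M\<in>\<M>. x \<in> M}. \<Sum>t\<in>M - {x}. 1)"
    using sum_nbrs_by_clique_partition[OF cliques unique, of "\<lambda>_. 1 :: real"] by simp
  also have "\<dots> = (\<Sum>M\<in>{M\<in>\<M>. x \<in> M}. s)"
  proof (rule sum.cong)
    fix M assume M: "M \<in> {M\<in>\<M>. x \<in> M}"
    then have "finite M" using cliques finite_V by (auto simp: is_clique_def intro: finite_subset)
    then have "card M > 0" using M by (auto simp: card_gt_0_iff)
    then show "(\<Sum>t\<in>M - {x}. 1) = s" using size M \<open>finite M\<close> by (simp add: of_nat_diff)
  qed simp
  finally show ?thesis by simp
qed

end

section \<open>Distance polynomials and Delsarte's clique bound\<close>

locale distance_regular_graph =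
  fixes V :: "'a set" and E :: "'a \<Rightarrow> 'a \<Rightarrow> bool" and bi ci :: "nat \<Rightarrow> nat" and D :: nat
  assumes drg: "distance_regular V E bi ci" and diameter: "diameter V E = D"

sublocale distance_regular_graph \<subseteq> connected_simple_graph
  using drg by unfold_locales (simp_all add: distance_regular_def)

context distance_regular_graph
begin

abbreviation k :: nat where "k \<equiv> bi 0"

lemma intersection_numbers:
  assumes "x \<in> V" "y \<in> V" "d x y = i"
  shows "ci i = card {z\<in>V. E y z \<and> d x z + 1 = i}"
    and "bi i = card {z\<in>V. E y z \<and> d x z = i + 1}"
  using drg assms unfolding distance_regular_def by blast+

lemma diameter_eq_Max: "Max ((\<lambda>(x, y). d x y) ` (V \<times> V)) = D"
proof -
  have "{d x y |x y. x \<in> V \<and> y \<in> V} = (\<lambda>(x, y). d x y) ` (V \<times> V)" by auto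
  then show ?thesis using diameter by (simp add: diameter_def)
qed

lemma gdist_le_diameter:
  assumes "x \<in> V" "y \<in> V"
  shows "d x y \<le> D"
proof -
  have "d x y \<in> (\<lambda>(x, y). d x y) ` (V \<times> V)" using assms by force
  then show ?thesis using Max_ge diameter_eq_Max finite_V by (metis finite_SigmaI finite_imageI)
qed

lemma diameter_attained:
  obtains x y where "x \<in> V" "y \<in> V" "d x y = D"
proof -
  have "D \<in> (\<lambda>(x, y). d x y) ` (V \<times> V)"
    using Max_in[of "(\<lambda>(x, y). d x y) ` (V \<times> V)"] diameter_eq_Max finite_V V_ne by auto
  then show thesis using that by auto
qed

lemma card_nbrs:
  assumes "y \<in> V"
  shows "card (nbrs y) = k"
proof -
  have "{z\<in>V. E y z \<and> d y z = 0 + 1} = nbrs y" using gdist_edge by auto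
  then show ?thesis using intersection_numbers(2)[OF assms assms gdist_self] by simp
qed

lemma ci_0: "ci 0 = 0"
proof -
  obtain x where x: "x \<in> V" using V_ne by blast
  show ?thesis using intersection_numbers(1)[OF x x gdist_self] by simp
qed

lemma ci_pos:
  assumes "1 \<le> i" "i \<le> D"
  shows "0 < ci i"
proof -
  obtain x y where xy: "x \<in> V" "y \<in> V" "d x y = D" by (rule diameter_attained)
  obtain j where j: "i = Suc j" using assms(1) by (cases i) auto
  obtain z where z: "z \<in> V" "d x z = i"
    using gdist_intermediate[OF xy(1,2)] xy(3) assms(2) by blast
  obtain z' where z': "z' \<in> V" "E z' z" "d x z' = j"
    using gdist_pred[OF xy(1) z(1)] z(2) j by blast
  have "z' \<in> {t\<in>V. E z t \<and> d x t + 1 = i}" using z' j edge_sym by auto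
  then have "card {t\<in>V. E z t \<and> d x t + 1 = i} > 0"
    using finite_V by (auto simp: card_gt_0_iff)
  then show ?thesis using intersection_numbers(1)[OF xy(1) z] by simp
qed

lemma bi_pos:
  assumes "i < D"
  shows "0 < bi i"
proof -
  obtain x y where xy: "x \<in> V" "y \<in> V" "d x y = D" by (rule diameter_attained)
  obtain z where z: "z \<in> V" "d x z = Suc i"
    using gdist_intermediate[OF xy(1,2)] xy(3) assms by (metis Suc_leI)
  obtain z' where z': "z' \<in> V" "E z' z" "d x z' = i"
    using gdist_pred[OF xy(1) z(1)] z(2) by blast
  have "z \<in> {t\<in>V. E z' t \<and> d x t = i + 1}" using z z' by auto
  then have "card {t\<in>V. E z' t \<and> d x t = i + 1} > 0"
    using finite_V by (auto simp: card_gt_0_iff)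
  then show ?thesis using intersection_numbers(2)[OF xy(1) z'(1,3)] by simp
qed

definition ai :: "nat \<Rightarrow> real" where
  "ai i = real k - real (bi i) - real (ci i)"

lemma sum_nbrs_by_distance:
  assumes x: "x \<in> V" and y: "y \<in> V" and i: "d x y = i"
  shows "(\<Sum>z\<in>nbrs y. h (d x z)) = real (ci i) * h (i - 1) + ai i * h i + real (bi i) * h (i + 1)"
proof -
  let ?P = "\<lambda>j. {z\<in>V. E y z \<and> d x z = j}"
  let ?P1 = "{z\<in>V. E y z \<and> d x z + 1 = i}"
  have "d x z + 1 = i \<or> d x z = i \<or> d x z = i + 1" if "z \<in> nbrs y" for z
    using that gdist_step[OF x, of y z] gdist_step[OF x, of z y] edge_sym i by force
  then have split: "nbrs y = ?P1 \<union> ?P i \<union> ?P (i + 1)" by auto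
  have fin: "finite ?P1" "finite (?P j)" for j using finite_V by auto
  have card_P1: "card ?P1 = ci i" and card_P3: "card (?P (i + 1)) = bi i"
    using intersection_numbers[OF x y i] by auto
  have disj: "?P1 \<inter> ?P i = {}" "(?P1 \<union> ?P i) \<inter> ?P (i + 1) = {}" by auto
  have "card (nbrs y) = card ?P1 + card (?P i) + card (?P (i + 1))"
    unfolding split using fin disj by (simp add: card_Un_disjoint)
  then have card_P2: "real (card (?P i)) = ai i"
    using card_nbrs[OF y] card_P1 card_P3 by (simp add: ai_def)
  have const: "(\<Sum>z\<in>S. h (d x z)) = real (card S) * h j" if "\<And>z. z \<in> S \<Longrightarrow> d x z = j" for S j
    using that by simp
  have "(\<Sum>z\<in>nbrs y. h (d x z))
      = (\<Sum>z\<in>?P1. h (d x z)) + (\<Sum>z\<in>?P i. h (d x z)) + (\<Sum>z\<in>?P (i + 1). h (d x z))"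
    unfolding split using fin disj by (simp add: sum.union_disjoint)
  also have "\<dots> = real (card ?P1) * h (i - 1) + real (card (?P i)) * h i
      + real (card (?P (i + 1))) * h (i + 1)"
    by (subst (1 2 3) const) auto
  finally show ?thesis using card_P1 card_P2 card_P3 by simp
qed

definition sphere :: "'a \<Rightarrow> nat \<Rightarrow> 'a set" where
  "sphere x i = {z\<in>V. d x z = i}"

definition eigenfun :: "real \<Rightarrow> ('a \<Rightarrow> real) \<Rightarrow> bool" where
  "eigenfun \<theta> w \<longleftrightarrow> (\<forall>z\<in>V. (\<Sum>t\<in>nbrs z. w t) = \<theta> * w z)"

lemma adj_eigenvalue_iff: "adj_eigenvalue V E \<theta> \<longleftrightarrow> (\<exists>w. eigenfun \<theta> w \<and> (\<exists>x\<in>V. w x \<noteq> 0))"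
  by (auto simp: adj_eigenvalue_def eigenfun_def)

lemma card_nbrs_in_sphere:
  assumes x: "x \<in> V" and t: "t \<in> V"
  shows "real (card (nbrs t \<inter> sphere x i)) =
     (if d x t = i + 1 then real (ci (i + 1)) else 0) + (if d x t = i then ai i else 0) +
     (if d x t + 1 = i then real (bi (i - 1)) else 0)"
proof -
  let ?j = "d x t"
  have "nbrs t \<inter> sphere x i = {z\<in>nbrs t. d x z = i}" by (auto simp: sphere_def)
  then have "real (card (nbrs t \<inter> sphere x i)) = (\<Sum>z\<in>nbrs t. if d x z = i then 1 else 0)"
    using sum.inter_filter[of "nbrs t" "\<lambda>_. 1::real" "\<lambda>z. d x z = i"] finite_V by simp
  also have "\<dots> = real (ci ?j) * (if ?j - 1 = i then 1 else 0) + ai ?j * (if ?j = i then 1 else 0)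
      + real (bi ?j) * (if ?j + 1 = i then 1 else 0)"
    by (rule sum_nbrs_by_distance[OF x t refl])
  also have "\<dots> = (if ?j = i + 1 then real (ci (i + 1)) else 0) + (if ?j = i then ai i else 0) +
     (if ?j + 1 = i then real (bi (i - 1)) else 0)"
  proof -
    consider "?j = i + 1" | "?j = i" | "?j + 1 = i" | "?j \<noteq> i + 1" "?j \<noteq> i" "?j + 1 \<noteq> i"
      by blast
    then show ?thesis
    proof cases
      case 2
      then show ?thesis using ci_0 by (cases i) auto
    qed auto
  qed
  finally show ?thesis .
qed

lemma sphere_sum_recurrence:
  assumes eig: "eigenfun \<theta> w" and x: "x \<in> V"
  shows "\<theta> * sum w (sphere x i) = real (ci (i + 1)) * sum w (sphere x (i + 1))
     + ai i * sum w (sphere x i) + (if 1 \<le> i then real (bi (i - 1)) * sum w (sphere x (i - 1)) else 0)"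
proof -
  have fin: "finite (sphere x i)" using finite_V by (simp add: sphere_def)
  have restrict: "(\<Sum>t\<in>V. if d x t = j then c * w t else 0) = c * sum w (sphere x j)" for j c
    using sum.inter_filter[of V "\<lambda>t. c * w t" "\<lambda>t. d x t = j"] finite_V
    by (simp add: sphere_def sum_distrib_left)
  have "\<theta> * sum w (sphere x i) = (\<Sum>z\<in>sphere x i. \<Sum>t\<in>{t\<in>V. E z t}. w t)"
    using eig by (auto simp: eigenfun_def sum_distrib_left sphere_def intro!: sum.cong)
  also have "\<dots> = (\<Sum>t\<in>V. \<Sum>z\<in>{z\<in>sphere x i. E z t}. w t)"
    by (rule sum.swap_restrict[OF fin finite_V])
  also have "\<dots> = (\<Sum>t\<in>V. w t * real (card (nbrs t \<inter> sphere x i)))"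
  proof (rule sum.cong)
    fix t assume "t \<in> V"
    have "{z\<in>sphere x i. E z t} = nbrs t \<inter> sphere x i"
      using edge_sym by (auto simp: sphere_def)
    then show "(\<Sum>z\<in>{z\<in>sphere x i. E z t}. w t) = w t * real (card (nbrs t \<inter> sphere x i))"
      by simp
  qed simp
  also have "\<dots> = (\<Sum>t\<in>V. (if d x t = i + 1 then real (ci (i + 1)) * w t else 0)
      + (if d x t = i then ai i * w t else 0)
      + (if d x t + 1 = i then real (bi (i - 1)) * w t else 0))"
    by (intro sum.cong refl) (simp add: card_nbrs_in_sphere[OF x] algebra_simps)
  also have "\<dots> = real (ci (i + 1)) * sum w (sphere x (i + 1)) + ai i * sum w (sphere x i)
      + (if 1 \<le> i then real (bi (i - 1)) * sum w (sphere x (i - 1)) else 0)"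
  proof -
    have "(\<Sum>t\<in>V. if d x t + 1 = i then c * w t else 0)
        = (if 1 \<le> i then c * sum w (sphere x (i - 1)) else 0)" for c
    proof (cases "1 \<le> i")
      case True
      then have "(\<Sum>t\<in>V. if d x t + 1 = i then c * w t else 0)
          = (\<Sum>t\<in>V. if d x t = i - 1 then c * w t else 0)"
        by (intro sum.cong) auto
      then show ?thesis using restrict True by simp
    qed simp
    then show ?thesis by (simp only: sum.distrib restrict)
  qed
  finally show ?thesis .
qed

text \<open>\<open>dpoly i\<close> is the polynomial \<open>v\<^sub>i\<close> with \<open>A\<^sub>i = v\<^sub>i(A)\<close> for the distance-\<open>i\<close> matrix \<open>A\<^sub>i\<close>.\<close>
fun dpoly :: "nat \<Rightarrow> real poly" where
  "dpoly 0 = 1"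
| "dpoly (Suc 0) = [:0, 1:]"
| "dpoly (Suc (Suc i)) = smult (1 / real (ci (Suc (Suc i))))
     ([:- ai (Suc i), 1:] * dpoly (Suc i) - smult (real (bi i)) (dpoly i))"

lemma sphere_sum_eigenfun:
  assumes eig: "eigenfun \<theta> w" and x: "x \<in> V"
  shows "i \<le> D \<Longrightarrow> sum w (sphere x i) = poly (dpoly i) \<theta> * w x"
proof (induction i rule: dpoly.induct)
  case 1
  have "sphere x 0 = {x}" using x gdist_eq_0_iff by (auto simp: sphere_def)
  then show ?case by simp
next
  case 2
  have "sphere x 1 = nbrs x" using x gdist_eq_1_iff by (auto simp: sphere_def)
  then show ?case using eig x by (simp add: eigenfun_def)
next
  case (3 j)
  let ?S = "\<lambda>i. sum w (sphere x i)"
  have "\<theta> * ?S (Suc j) = real (ci (Suc (Suc j))) * ?S (Suc (Suc j)) + ai (Suc j) * ?S (Suc j)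
      + real (bi j) * ?S j"
    using sphere_sum_recurrence[OF eig x, of "Suc j"] by simp
  moreover have "0 < ci (Suc (Suc j))" using ci_pos "3.prems" by simp
  ultimately have "?S (Suc (Suc j))
      = ((\<theta> - ai (Suc j)) * ?S (Suc j) - real (bi j) * ?S j) / real (ci (Suc (Suc j)))"
    by (simp add: field_simps)
  then show ?case using 3 by (simp add: field_simps)
qed

definition signed_dpoly :: "real \<Rightarrow> nat \<Rightarrow> real" where
  "signed_dpoly \<theta> j = (-1) ^ j * poly (dpoly j) \<theta>"

lemma signed_dpoly_Suc_Suc:
  assumes "Suc (Suc j) \<le> D"
  shows "real (ci (Suc (Suc j))) * signed_dpoly \<theta> (Suc (Suc j))
    = (ai (Suc j) - \<theta>) * signed_dpoly \<theta> (Suc j) - real (bi j) * signed_dpoly \<theta> j"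
  using ci_pos[of "Suc (Suc j)"] assms by (simp add: signed_dpoly_def algebra_simps)

definition eig_poly :: "real poly" where
  "eig_poly = [:- ai D, 1:] * dpoly D - smult (real (bi (D - 1))) (dpoly (D - 1))"

lemma eigenvalue_root_eig_poly:
  assumes D: "0 < D" and "adj_eigenvalue V E \<theta>"
  shows "poly eig_poly \<theta> = 0"
proof -
  obtain w x where eig: "eigenfun \<theta> w" and x: "x \<in> V" "w x \<noteq> 0"
    using assms(2) adj_eigenvalue_iff by blast
  let ?S = "\<lambda>i. sum w (sphere x i)"
  have "sphere x (D + 1) = {}" using gdist_le_diameter x by (fastforce simp: sphere_def)
  then have "\<theta> * ?S D = ai D * ?S D + real (bi (D - 1)) * ?S (D - 1)"
    using sphere_sum_recurrence[OF eig x(1), of D] D by simp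
  then have "poly eig_poly \<theta> * w x = 0"
    using sphere_sum_eigenfun[OF eig x(1)] by (simp add: eig_poly_def algebra_simps)
  with x(2) show ?thesis by simp
qed

lemma degree_dpoly: "i \<le> D \<Longrightarrow> degree (dpoly i) = i"
proof (induction i rule: dpoly.induct)
  case (3 i)
  let ?p = "[:- ai (Suc i), 1:] * dpoly (Suc i) - smult (real (bi i)) (dpoly i)"
  have "dpoly (Suc i) \<noteq> 0" using 3 by fastforce
  then have "degree ([:- ai (Suc i), 1:] * dpoly (Suc i)) = Suc (Suc i)"
    using degree_mult_eq[of "[:- ai (Suc i), 1:]" "dpoly (Suc i)"] 3 by simp
  moreover have "degree (smult (real (bi i)) (dpoly i)) < Suc (Suc i)" using 3 by simp
  ultimately have "degree ?p = Suc (Suc i)" by (simp add: degree_diff_eq_left)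
  moreover have "ci (Suc (Suc i)) \<noteq> 0" using ci_pos "3.prems" by fastforce
  ultimately show ?case by simp
qed simp_all

lemma dpoly_nonzero:
  assumes "i \<le> D"
  shows "dpoly i \<noteq> 0"
proof (cases i)
  case (Suc j)
  then show ?thesis using degree_dpoly[OF assms] by auto
qed simp

lemma eig_poly_nonzero: "eig_poly \<noteq> 0"
proof -
  have "degree ([:- ai D, 1:] * dpoly D) = Suc D"
    using degree_mult_eq[of "[:- ai D, 1:]" "dpoly D"] dpoly_nonzero[of D] degree_dpoly[of D] by simp
  moreover have "degree (smult (real (bi (D - 1))) (dpoly (D - 1))) < Suc D"
    using degree_dpoly[of "D - 1"] by auto
  ultimately have "degree eig_poly = Suc D" by (simp add: eig_poly_def degree_diff_eq_left)
  then show ?thesis by auto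
qed

lemma finite_eigenvalues:
  assumes "0 < D"
  shows "finite {\<theta>. adj_eigenvalue V E \<theta>}"
proof (rule finite_subset)
  show "{\<theta>. adj_eigenvalue V E \<theta>} \<subseteq> {\<theta>. poly eig_poly \<theta> = 0}"
    using eigenvalue_root_eig_poly[OF assms] by blast
qed (rule poly_roots_finite[OF eig_poly_nonzero])

lemma min_eigenvalue_eqI:
  assumes "0 < D" "adj_eigenvalue V E \<theta>" "\<And>\<theta>'. adj_eigenvalue V E \<theta>' \<Longrightarrow> \<theta> \<le> \<theta>'"
  shows "min_eigenvalue V E = \<theta>"
  unfolding min_eigenvalue_def using finite_eigenvalues[OF assms(1)] assms(2,3)
  by (intro Min_eqI) auto

lemma sum_radial_times_eigenfun:
  assumes eig: "eigenfun \<theta> w" and x: "x \<in> V"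
  shows "(\<Sum>z\<in>V. u (d x z) * w z) = (\<Sum>i\<le>D. u i * poly (dpoly i) \<theta>) * w x"
proof -
  have "(\<Sum>z\<in>V. u (d x z) * w z) = (\<Sum>i\<le>D. \<Sum>z\<in>sphere x i. u (d x z) * w z)"
    unfolding sphere_def
    by (rule sum.group[symmetric]) (use finite_V gdist_le_diameter[OF x] in auto)
  also have "\<dots> = (\<Sum>i\<le>D. u i * sum w (sphere x i))"
    by (auto simp: sphere_def sum_distrib_left intro!: sum.cong)
  also have "\<dots> = (\<Sum>i\<le>D. u i * poly (dpoly i) \<theta> * w x)"
    using sphere_sum_eigenfun[OF eig x] by (auto intro!: sum.cong)
  finally show ?thesis by (simp add: sum_distrib_right)
qed

lemma eigenfun_sum:
  assumes "\<And>y. y \<in> K \<Longrightarrow> eigenfun \<theta> (f y)"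
  shows "eigenfun \<theta> (\<lambda>z. \<Sum>y\<in>K. f y z)"
  unfolding eigenfun_def
proof
  fix z assume "z \<in> V"
  have "(\<Sum>t\<in>nbrs z. \<Sum>y\<in>K. f y t) = (\<Sum>y\<in>K. \<Sum>t\<in>nbrs z. f y t)" by (rule sum.swap)
  also have "\<dots> = (\<Sum>y\<in>K. \<theta> * f y z)"
    using assms \<open>z \<in> V\<close> by (auto simp: eigenfun_def intro!: sum.cong)
  finally show "(\<Sum>t\<in>nbrs z. \<Sum>y\<in>K. f y t) = \<theta> * (\<Sum>y\<in>K. f y z)"
    by (simp add: sum_distrib_left)
qed

lemma radial_eigenfun_1:
  assumes u0: "u 0 = 1" and radial: "\<And>x. x \<in> V \<Longrightarrow> eigenfun \<theta> (\<lambda>z. u (d x z))"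
  shows "real k * u 1 = \<theta>"
proof -
  obtain x where x: "x \<in> V" using V_ne by blast
  have "(\<Sum>t\<in>nbrs x. u (d x t)) = (\<Sum>t\<in>nbrs x. u 1)" using gdist_edge by simp
  then show ?thesis using radial[OF x] x u0 card_nbrs[OF x] by (simp add: eigenfun_def)
qed

lemma radial_eigenfun_norm_ge_1:
  assumes u0: "u 0 = 1" and radial: "\<And>x. x \<in> V \<Longrightarrow> eigenfun \<theta> (\<lambda>z. u (d x z))"
  shows "1 \<le> (\<Sum>i\<le>D. u i * poly (dpoly i) \<theta>)"
proof -
  obtain x where x: "x \<in> V" using V_ne by blast
  have "(\<Sum>z\<in>V. u (d x z) * u (d x z)) = (\<Sum>i\<le>D. u i * poly (dpoly i) \<theta>)"
    using sum_radial_times_eigenfun[OF radial[OF x] x] u0 by simp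
  moreover have "u (d x x) * u (d x x) \<le> (\<Sum>z\<in>V. u (d x z) * u (d x z))"
    by (rule member_le_sum) (use x finite_V in auto)
  ultimately show ?thesis using u0 by simp
qed

text \<open>Delsarte's argument: \<open>g = (\<Sum>y\<in>K. u (d y -))\<close> is again an eigenfunction, so
  \<open>c * (\<Sum>x\<in>K. g x) = \<parallel>g\<parallel>\<^sup>2 \<ge> 0\<close> with \<open>c \<ge> 1\<close>, while \<open>g\<close> is constant on \<open>K\<close>.\<close>
lemma clique_card_le_delsarte:
  assumes u0: "u 0 = 1" and radial: "\<And>x. x \<in> V \<Longrightarrow> eigenfun \<theta> (\<lambda>z. u (d x z))"
    and \<theta>: "\<theta> < 0" and K: "is_clique V E K"
  shows "real (card K) \<le> 1 - real k / \<theta>"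
proof -
  have u1: "real k * u 1 = \<theta>" by (rule radial_eigenfun_1[OF u0 radial])
  then have k_pos: "0 < real k" using \<theta> by (cases "k = 0") auto
  define c where "c = (\<Sum>i\<le>D. u i * poly (dpoly i) \<theta>)"
  have KV: "K \<subseteq> V" and K_edge: "\<And>x y. x \<in> K \<Longrightarrow> y \<in> K \<Longrightarrow> x \<noteq> y \<Longrightarrow> E x y"
    using K by (auto simp: is_clique_def)
  then have fin_K: "finite K" using finite_V finite_subset by blast
  define g where "g z = (\<Sum>y\<in>K. u (d y z))" for z
  have eig_g: "eigenfun \<theta> g"
    unfolding g_def by (rule eigenfun_sum) (use radial KV in auto)
  have "c * sum g K = (\<Sum>x\<in>K. \<Sum>z\<in>V. u (d x z) * g z)"
    using sum_radial_times_eigenfun[OF eig_g] KV by (auto simp: c_def sum_distrib_left intro!: sum.cong)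
  also have "\<dots> = (\<Sum>z\<in>V. \<Sum>x\<in>K. u (d x z) * g z)" by (rule sum.swap)
  also have "\<dots> = (\<Sum>z\<in>V. g z * g z)" by (simp add: g_def sum_distrib_right)
  finally have "0 \<le> c * sum g K" by (simp add: sum_nonneg)
  then have sum_g: "0 \<le> sum g K"
    using radial_eigenfun_norm_ge_1[OF u0 radial] by (simp add: c_def zero_le_mult_iff)
  have "g x = 1 + (real (card K) - 1) * u 1" if x: "x \<in> K" for x
  proof -
    have "g x = u (d x x) + (\<Sum>y\<in>K - {x}. u (d y x))"
      unfolding g_def using x fin_K by (simp add: sum.remove)
    also have "(\<Sum>y\<in>K - {x}. u (d y x)) = (\<Sum>y\<in>K - {x}. u 1)"
      using K_edge x gdist_edge by (intro sum.cong) auto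
    moreover have "0 < card K" using x fin_K card_gt_0_iff by blast
    ultimately show ?thesis using x fin_K u0 by (simp add: of_nat_diff)
  qed
  then have sum_g_eq: "sum g K = real (card K) * (1 + (real (card K) - 1) * u 1)" by simp
  show ?thesis
  proof (cases "K = {}")
    case True
    have "real k / \<theta> < 0" using \<theta> k_pos by (simp add: divide_pos_neg)
    then show ?thesis using True by simp
  next
    case False
    then have "0 < real (card K)" using fin_K by (simp add: card_gt_0_iff)
    then have "0 \<le> real k * (1 + (real (card K) - 1) * u 1)"
      using sum_g sum_g_eq k_pos by (simp add: zero_le_mult_iff)
    also have "\<dots> = real k + (real (card K) - 1) * \<theta>" using u1 by (simp add: algebra_simps)
    finally have "real k / \<theta> \<le> 1 - real (card K)"
      using \<theta> by (simp only: neg_divide_le_eq) (simp add: algebra_simps)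
    then show ?thesis by simp
  qed
qed

end

section \<open>Classical parameters: the smallest eigenvalue\<close>

lemma gbr_0 [simp]: "gbr b 0 = 0"
  by (simp add: gbr_def)

lemma gbr_Suc: "b \<noteq> 1 \<Longrightarrow> gbr b (Suc i) = real_of_int b * gbr b i + 1"
  by (simp add: gbr_def field_simps)

lemma gbr_1: "b \<noteq> 1 \<Longrightarrow> gbr b 1 = 1"
  using gbr_Suc[of b 0] by simp

lemma gbr_nonneg: "1 < b \<Longrightarrow> 0 \<le> gbr b i"
  by (induction i) (simp_all add: gbr_Suc)

lemma strict_mono_gbr: "1 < b \<Longrightarrow> strict_mono (gbr b)"
proof (rule strict_mono_Suc_iff[THEN iffD2], intro allI)
  fix i assume "1 < b"
  then have "gbr b i \<le> real_of_int b * gbr b i"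
    using gbr_nonneg[of b i] by (simp add: mult_le_cancel_right1)
  then show "gbr b i < gbr b (Suc i)" using \<open>1 < b\<close> by (simp add: gbr_Suc)
qed

locale classical_drg = distance_regular_graph +
  fixes b :: int and \<alpha> \<beta> :: real
  assumes classical: "classical_parameters V E bi ci D b \<alpha> \<beta>"
    and b_gt_1: "1 < b" and \<alpha>_nonneg: "0 \<le> \<alpha>" and D_ge_2: "2 \<le> D"
begin

abbreviation gb :: "nat \<Rightarrow> real" where "gb \<equiv> gbr b"
abbreviation r :: real where "r \<equiv> gbr b D"

lemma bi_eq: "i \<le> D \<Longrightarrow> real (bi i) = (r - gb i) * (\<beta> - \<alpha> * gb i)"
  and ci_eq: "i \<le> D \<Longrightarrow> real (ci i) = gb i * (1 + \<alpha> * gb (i - 1))"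
  using classical by (simp_all add: classical_parameters_def)

lemma k_eq: "real k = r * \<beta>"
  using bi_eq[of 0] by simp

lemma gb_1: "gb 1 = 1"
  using b_gt_1 gbr_1[of b] by simp

lemma gb_less: "i < j \<Longrightarrow> gb i < gb j"
  using strict_mono_gbr[OF b_gt_1] by (simp add: strict_mono_def)

lemma gb_le: "i \<le> j \<Longrightarrow> gb i \<le> gb j"
  using gb_less by (cases "i = j") (auto simp: le_less)

lemma gb_nonneg: "0 \<le> gb i"
  using gbr_nonneg[OF b_gt_1] .

lemma r_gt_1: "1 < r"
  using gb_less[of 1 D] D_ge_2 gb_1 by simp

lemma ai_Suc_eq:
  assumes "Suc j \<le> D"
  shows "ai (Suc j) + r = (\<beta> - \<alpha> * gb j) * gb (Suc j) + (1 + \<alpha> * gb (Suc j)) * (r - gb (Suc j))"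
  using assms bi_eq[of "Suc j"] ci_eq[of "Suc j"] bi_eq[of 0] ci_eq[of 0]
  by (simp add: ai_def algebra_simps)

lemma alpha_gb_less_beta:
  assumes "i < D"
  shows "\<alpha> * gb i < \<beta>"
proof -
  have "0 < (r - gb (D - 1)) * (\<beta> - \<alpha> * gb (D - 1))"
    using bi_pos[of "D - 1"] bi_eq[of "D - 1"] D_ge_2 by simp
  moreover have "0 < r - gb (D - 1)" using gb_less[of "D - 1" D] D_ge_2 by simp
  ultimately have "\<alpha> * gb (D - 1) < \<beta>" by (simp add: zero_less_mult_iff)
  moreover have "\<alpha> * gb i \<le> \<alpha> * gb (D - 1)"
    using gb_le[of i "D - 1"] assms \<alpha>_nonneg by (simp add: mult_left_mono)
  ultimately show ?thesis by simp
qed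

lemma beta_pos: "0 < \<beta>"
  using alpha_gb_less_beta[of 0] D_ge_2 by simp

lemma signed_dpoly_step:
  assumes \<theta>: "\<theta> < - r" and j: "Suc j \<le> D" and pos: "0 < signed_dpoly \<theta> j"
    and grow: "(r - gb j) * signed_dpoly \<theta> j < gb (Suc j) * signed_dpoly \<theta> (Suc j)"
  shows "0 < signed_dpoly \<theta> (Suc j)"
    and "(1 + \<alpha> * gb (Suc j)) * ((r - gb (Suc j)) * signed_dpoly \<theta> (Suc j))
      < (ai (Suc j) - \<theta>) * signed_dpoly \<theta> (Suc j) - real (bi j) * signed_dpoly \<theta> j"
proof -
  let ?s = "signed_dpoly \<theta>" and ?X = "\<beta> - \<alpha> * gb j" and ?Q = "1 + \<alpha> * gb (Suc j)"
  have "0 < (r - gb j) * ?s j" using pos gb_less[of j D] j by (intro mult_pos_pos) auto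
  then have "0 < gb (Suc j) * ?s (Suc j)" using grow by linarith
  then show s1: "0 < ?s (Suc j)" using gb_nonneg[of "Suc j"] by (simp add: zero_less_mult_iff)
  have X: "0 < ?X" using alpha_gb_less_beta[of j] j by simp
  have "real (bi j) * ?s j = ?X * ((r - gb j) * ?s j)" using bi_eq[of j] j by simp
  also have "\<dots> < ?X * (gb (Suc j) * ?s (Suc j))" using grow X by simp
  finally have b_s: "real (bi j) * ?s j < ?X * (gb (Suc j) * ?s (Suc j))" .
  have r_s: "r * ?s (Suc j) < (- \<theta>) * ?s (Suc j)" using \<theta> s1 by (intro mult_strict_right_mono) auto
  have "(ai (Suc j) + r) * ?s (Suc j) = (?X * gb (Suc j) + ?Q * (r - gb (Suc j))) * ?s (Suc j)"
    using ai_Suc_eq[OF j] by simp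
  then show "?Q * ((r - gb (Suc j)) * ?s (Suc j)) < (ai (Suc j) - \<theta>) * ?s (Suc j) - real (bi j) * ?s j"
    using b_s r_s by (simp add: algebra_simps)
qed

text \<open>A Sturm-type sign pattern: below \<open>-r\<close> the distance polynomials alternate in sign and grow
  fast enough that the eigenvalue polynomial cannot vanish.\<close>
lemma signed_dpoly_growth:
  assumes \<theta>: "\<theta> < - r"
  shows "j < D \<Longrightarrow> 0 < signed_dpoly \<theta> j
    \<and> (r - gb j) * signed_dpoly \<theta> j < gb (Suc j) * signed_dpoly \<theta> (Suc j)"
proof (induction j)
  case 0
  then show ?case using \<theta> gb_1 by (simp add: signed_dpoly_def)
next
  case (Suc j)
  let ?s = "signed_dpoly \<theta>" and ?Q = "1 + \<alpha> * gb (Suc j)"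
  have j: "Suc j \<le> D" using Suc.prems by simp
  note step = signed_dpoly_step[OF \<theta> j] Suc
  have "?Q * (gb (Suc (Suc j)) * ?s (Suc (Suc j))) = real (ci (Suc (Suc j))) * ?s (Suc (Suc j))"
    using ci_eq[of "Suc (Suc j)"] Suc.prems by (simp add: mult_ac)
  then have "?Q * ((r - gb (Suc j)) * ?s (Suc j)) < ?Q * (gb (Suc (Suc j)) * ?s (Suc (Suc j)))"
    using step signed_dpoly_Suc_Suc[of j \<theta>] Suc.prems by simp
  moreover have "0 < ?Q" using gb_nonneg[of "Suc j"] \<alpha>_nonneg by (simp add: add_pos_nonneg)
  ultimately show ?case using step by simp
qed

lemma eig_poly_sign_below:
  assumes \<theta>: "\<theta> < - r"
  shows "0 < (-1) ^ Suc D * poly eig_poly \<theta>"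
proof -
  obtain m where D: "D = Suc m" using D_ge_2 by (cases D) auto
  have "(-1) ^ Suc D * poly eig_poly \<theta>
      = (ai (Suc m) - \<theta>) * signed_dpoly \<theta> (Suc m) - real (bi m) * signed_dpoly \<theta> m"
    unfolding eig_poly_def signed_dpoly_def using D by (simp add: algebra_simps)
  moreover have "0 < signed_dpoly \<theta> m"
    and "(r - gb m) * signed_dpoly \<theta> m < gb (Suc m) * signed_dpoly \<theta> (Suc m)"
    using signed_dpoly_growth[OF \<theta>, of m] D by auto
  then have "(1 + \<alpha> * gb (Suc m)) * ((r - gb (Suc m)) * signed_dpoly \<theta> (Suc m))
      < (ai (Suc m) - \<theta>) * signed_dpoly \<theta> (Suc m) - real (bi m) * signed_dpoly \<theta> m"
    using signed_dpoly_step(2)[OF \<theta>, of m] D by simp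
  ultimately show ?thesis using D by simp
qed

lemma eigenvalue_ge: "adj_eigenvalue V E \<theta> \<Longrightarrow> - r \<le> \<theta>"
  using eigenvalue_root_eig_poly[of \<theta>] eig_poly_sign_below[of \<theta>] D_ge_2 by fastforce

text \<open>The standard sequence of the eigenvalue \<open>-r\<close>.\<close>
fun std_seq :: "nat \<Rightarrow> real" where
  "std_seq 0 = 1"
| "std_seq (Suc i) = - std_seq i * (1 + \<alpha> * gb i) / (\<beta> - \<alpha> * gb i)"

lemma std_seq_Suc_mult:
  assumes "i < D"
  shows "(\<beta> - \<alpha> * gb i) * std_seq (Suc i) = - ((1 + \<alpha> * gb i) * std_seq i)"
proof -
  have "\<beta> - \<alpha> * gb i \<noteq> 0" using alpha_gb_less_beta[OF assms] by simp
  then show ?thesis by simp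
qed

lemma std_seq_recurrence:
  assumes "i \<le> D"
  shows "real (ci i) * std_seq (i - 1) + ai i * std_seq i + real (bi i) * std_seq (i + 1)
    = - r * std_seq i"
proof (cases i)
  case 0
  then show ?thesis using beta_pos k_eq ci_0 by (simp add: ai_def)
next
  case (Suc j)
  let ?X = "\<beta> - \<alpha> * gb j" and ?Q = "1 + \<alpha> * gb (Suc j)"
  have "real (ci (Suc j)) * std_seq j = gb (Suc j) * ((1 + \<alpha> * gb j) * std_seq j)"
    using ci_eq[of "Suc j"] Suc assms by simp
  also have "\<dots> = gb (Suc j) * - (?X * std_seq (Suc j))"
    using std_seq_Suc_mult[of j] Suc assms by (metis Suc_le_lessD minus_minus)
  also have "\<dots> = - ?X * (gb (Suc j) * std_seq (Suc j))" by (simp add: algebra_simps del: std_seq.simps)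
  finally have c_u: "real (ci (Suc j)) * std_seq j = - ?X * (gb (Suc j) * std_seq (Suc j))" .
  have b_u: "real (bi (Suc j)) * std_seq (Suc (Suc j)) = - ?Q * ((r - gb (Suc j)) * std_seq (Suc j))"
  proof (cases "Suc j < D")
    case True
    have "real (bi (Suc j)) * std_seq (Suc (Suc j))
        = (r - gb (Suc j)) * ((\<beta> - \<alpha> * gb (Suc j)) * std_seq (Suc (Suc j)))"
      using bi_eq[of "Suc j"] True by (simp del: std_seq.simps)
    also have "\<dots> = (r - gb (Suc j)) * - (?Q * std_seq (Suc j))"
      by (simp only: std_seq_Suc_mult[OF True])
    finally show ?thesis by (simp add: algebra_simps del: std_seq.simps)
  next
    case False
    then have "r - gb (Suc j) = 0" using Suc assms by simp
    then show ?thesis using bi_eq[of "Suc j"] Suc assms by simp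
  qed
  have "(ai (Suc j) + r) * std_seq (Suc j)
      = (?X * gb (Suc j) + ?Q * (r - gb (Suc j))) * std_seq (Suc j)"
    using ai_Suc_eq[of j] Suc assms by simp
  then show ?thesis using Suc c_u b_u by (simp add: algebra_simps del: std_seq.simps)
qed

lemma std_seq_eigenfun: "x \<in> V \<Longrightarrow> eigenfun (- r) (\<lambda>z. std_seq (d x z))"
  unfolding eigenfun_def
  using sum_nbrs_by_distance std_seq_recurrence gdist_le_diameter by simp

lemma min_eigenvalue_eq: "min_eigenvalue V E = - r"
proof (rule min_eigenvalue_eqI)
  obtain x where "x \<in> V" using V_ne by blast
  then show "adj_eigenvalue V E (- r)"
    unfolding adj_eigenvalue_iff using std_seq_eigenfun by force
qed (use D_ge_2 eigenvalue_ge in auto)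

lemma exists_edge:
  assumes "x \<in> V"
  obtains y where "E x y"
proof -
  have "0 < real (card (nbrs x))" using card_nbrs[OF assms] k_eq r_gt_1 beta_pos by simp
  then have "nbrs x \<noteq> {}" by (intro notI) simp
  then show thesis using that by blast
qed

lemma clique_card_le: "is_clique V E K \<Longrightarrow> real (card K) \<le> 1 + \<beta>"
  using clique_card_le_delsarte[of std_seq "- r" K] std_seq_eigenfun r_gt_1 k_eq by simp

end

section \<open>Lines\<close>

locale geometric_classical_drg = classical_drg +
  fixes \<C> :: "'a set set"
  assumes geometric: "geometric V E k \<C>"
begin

lemma line_clique: "L \<in> \<C> \<Longrightarrow> is_clique V E L"
  using geometric by (simp add: geometric_def delsarte_clique_def)

lemma line_subset_V: "L \<in> \<C> \<Longrightarrow> L \<subseteq> V"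
  using line_clique by (simp add: is_clique_def)

lemma finite_line: "L \<in> \<C> \<Longrightarrow> finite L"
  using line_subset_V finite_V finite_subset by blast

lemma finite_lines: "finite \<C>"
proof (rule finite_subset)
  show "\<C> \<subseteq> Pow V" using line_subset_V by blast
qed (simp add: finite_V)

lemma line_edge: "L \<in> \<C> \<Longrightarrow> x \<in> L \<Longrightarrow> y \<in> L \<Longrightarrow> x \<noteq> y \<Longrightarrow> E x y"
  using line_clique by (simp add: is_clique_def)

lemma ex1_line: "E x y \<Longrightarrow> \<exists>!L. L \<in> \<C> \<and> x \<in> L \<and> y \<in> L"
  using geometric by (simp add: geometric_def)

lemma line_eqI:
  "L \<in> \<C> \<Longrightarrow> L' \<in> \<C> \<Longrightarrow> x \<in> L \<Longrightarrow> y \<in> L \<Longrightarrow> x \<in> L' \<Longrightarrow> y \<in> L' \<Longrightarrow> x \<noteq> y \<Longrightarrow> L = L'"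
  using ex1_line line_edge by blast

lemma line_through:
  assumes "E x y"
  shows "line_through \<C> x y \<in> \<C>" "x \<in> line_through \<C> x y" "y \<in> line_through \<C> x y"
  using theI'[OF ex1_line[OF assms]] unfolding line_through_def by blast+

lemma card_line: "L \<in> \<C> \<Longrightarrow> real (card L) = 1 + \<beta>"
  using geometric min_eigenvalue_eq k_eq r_gt_1 by (simp add: geometric_def delsarte_clique_def)

lemma card_lines_through: "x \<in> V \<Longrightarrow> real (card {L\<in>\<C>. x \<in> L}) = r"
  using card_nbrs_by_clique_partition[OF line_clique ex1_line, of x \<beta>] card_line
    card_nbrs k_eq beta_pos by (simp add: add.commute)

text \<open>Summing the squared line sums of \<open>f\<close> over all lines counts every vertex \<open>r\<close> times and
  every edge once, so it equals \<open>r \<parallel>f\<parallel>\<^sup>2 + \<langle>f, A f\<rangle> = 0\<close>.\<close>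
lemma line_sum_eigenfun:
  assumes eig: "eigenfun (- r) f" and L: "L \<in> \<C>"
  shows "(\<Sum>z\<in>L. f z) = 0"
proof -
  have swap: "(\<Sum>L\<in>\<C>. \<Sum>z\<in>L. h L z) = (\<Sum>z\<in>V. \<Sum>L\<in>{L\<in>\<C>. z \<in> L}. h L z)"
    for h :: "'a set \<Rightarrow> 'a \<Rightarrow> real"
  proof -
    have "{z\<in>V. z \<in> L} = L" if "L \<in> \<C>" for L using line_subset_V[OF that] by blast
    then have "(\<Sum>L\<in>\<C>. \<Sum>z\<in>L. h L z) = (\<Sum>L\<in>\<C>. \<Sum>z\<in>{z\<in>V. z \<in> L}. h L z)" by simp
    also have "\<dots> = (\<Sum>z\<in>V. \<Sum>L\<in>{L\<in>\<C>. z \<in> L}. h L z)"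
      by (rule sum.swap_restrict[OF finite_lines finite_V])
    finally show ?thesis .
  qed
  have "(\<Sum>L\<in>\<C>. (\<Sum>z\<in>L. f z)\<^sup>2) = (\<Sum>L\<in>\<C>. \<Sum>z\<in>L. f z * f z + f z * (\<Sum>t\<in>L - {z}. f t))"
  proof (rule sum.cong)
    fix L assume "L \<in> \<C>"
    then have "(\<Sum>t\<in>L. f t) = f z + (\<Sum>t\<in>L - {z}. f t)" if "z \<in> L" for z
      using that finite_line by (simp add: sum.remove)
    then show "(\<Sum>z\<in>L. f z)\<^sup>2 = (\<Sum>z\<in>L. f z * f z + f z * (\<Sum>t\<in>L - {z}. f t))"
      by (simp add: power2_eq_square sum_distrib_right algebra_simps)
  qed simp
  also have "\<dots> = (\<Sum>z\<in>V. \<Sum>L\<in>{L\<in>\<C>. z \<in> L}. f z * f z + f z * (\<Sum>t\<in>L - {z}. f t))"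
    by (rule swap)
  also have "\<dots> = (\<Sum>z\<in>V. r * (f z * f z) + f z * (\<Sum>t\<in>nbrs z. f t))"
  proof (rule sum.cong)
    fix z assume "z \<in> V"
    then show "(\<Sum>L\<in>{L\<in>\<C>. z \<in> L}. f z * f z + f z * (\<Sum>t\<in>L - {z}. f t))
        = r * (f z * f z) + f z * (\<Sum>t\<in>nbrs z. f t)"
      using card_lines_through sum_nbrs_by_clique_partition[OF line_clique ex1_line, of z f]
      by (simp add: sum.distrib sum_distrib_left)
  qed simp
  also have "\<dots> = 0" using eig by (simp add: eigenfun_def)
  finally have "(\<Sum>L\<in>\<C>. (\<Sum>z\<in>L. f z)\<^sup>2) = 0" .
  then show ?thesis using sum_nonneg_eq_0_iff[OF finite_lines, of "\<lambda>L. (\<Sum>z\<in>L. f z)\<^sup>2"] L by simp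
qed

lemma card_line_nbrs:
  assumes L: "L \<in> \<C>" and w: "w \<in> V" "w \<notin> L" and p: "p \<in> L" "E w p"
  shows "real (card {z\<in>L. E w z}) = 1 + \<alpha>"
proof -
  let ?L1 = "{z\<in>L. E w z}"
  have fin: "finite L" using finite_line[OF L] .
  have "d w z = 2" if "z \<in> L - ?L1" for z
  proof -
    have "E p z" using line_edge[OF L p(1)] that p by auto
    then have "d w z \<le> 2" using gdist_step[OF w(1), of p z] gdist_edge[OF p(2)] by simp
    moreover have "z \<in> V" "z \<noteq> w" "\<not> E w z" using that line_subset_V[OF L] w(2) by auto
    then have "d w z \<noteq> 0" "d w z \<noteq> 1" using w(1) gdist_eq_0_iff gdist_eq_1_iff by auto
    ultimately show ?thesis by linarith
  qed
  then have "(\<Sum>z\<in>L - ?L1. std_seq (d w z)) = real (card (L - ?L1)) * std_seq 2" by simp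
  moreover have "(\<Sum>z\<in>?L1. std_seq (d w z)) = real (card ?L1) * std_seq 1"
    using gdist_edge by simp
  moreover have "(\<Sum>z\<in>L. std_seq (d w z))
      = (\<Sum>z\<in>L - ?L1. std_seq (d w z)) + (\<Sum>z\<in>?L1. std_seq (d w z))"
    using sum.subset_diff[of ?L1 L] fin by auto
  ultimately have sum_0: "real (card (L - ?L1)) * std_seq 2 + real (card ?L1) * std_seq 1 = 0"
    using line_sum_eigenfun[OF std_seq_eigenfun[OF w(1)] L] by simp
  have "0 < \<beta> - \<alpha>" using alpha_gb_less_beta[of 1] gb_1 D_ge_2 by simp
  then have u1: "\<beta> * std_seq 1 = - 1" and u2: "\<beta> * (\<beta> - \<alpha>) * std_seq 2 = 1 + \<alpha>"
    using gb_1 beta_pos by (simp_all add: numeral_2_eq_2)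
  have "real (card (L - ?L1)) = 1 + \<beta> - real (card ?L1)"
    using card_line[OF L] fin card_Diff_subset[of ?L1 L] card_mono[of L ?L1]
    by (auto simp: of_nat_diff)
  moreover have "\<beta> * (\<beta> - \<alpha>) * (real (card (L - ?L1)) * std_seq 2 + real (card ?L1) * std_seq 1)
      = real (card (L - ?L1)) * (\<beta> * (\<beta> - \<alpha>) * std_seq 2)
        + (\<beta> - \<alpha>) * real (card ?L1) * (\<beta> * std_seq 1)"
    by (simp add: algebra_simps del: std_seq.simps)
  ultimately have "(1 + \<beta> - real (card ?L1)) * (1 + \<alpha>) - (\<beta> - \<alpha>) * real (card ?L1) = 0"
    unfolding sum_0 u1 u2 by simp
  then have "(real (card ?L1) - (1 + \<alpha>)) * (1 + \<beta>) = 0" by (simp add: algebra_simps)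
  then show ?thesis using beta_pos by simp
qed

end

section \<open>Assemblies\<close>

locale dual_pasch_drg = geometric_classical_drg +
  assumes dual_pasch: "dual_pasch V E \<C>" and \<alpha>_pos: "0 < \<alpha>"
begin

lemma assembly_clique: "assembly V E \<C> M \<Longrightarrow> is_clique V E M"
  by (simp add: assembly_def maximal_clique_def)

definition common_nbrs_off_line :: "'a \<Rightarrow> 'a \<Rightarrow> 'a set" where
  "common_nbrs_off_line x y = {z\<in>V. E x z \<and> E y z \<and> z \<notin> line_through \<C> x y}"

lemma clique_common_nbrs_off_line: "E x y \<Longrightarrow> is_clique V E (common_nbrs_off_line x y)"
  using dual_pasch by (simp add: dual_pasch_def common_nbrs_off_line_def)

lemma card_common_nbrs_off_line:
  assumes xy: "E x y"
  shows "real (card (common_nbrs_off_line x y)) = \<alpha> * (r - 1)"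
proof -
  let ?L = "line_through \<C> x y" and ?N = "common_nbrs_off_line x y"
  have L: "?L \<in> \<C>" "x \<in> ?L" "y \<in> ?L" using line_through[OF xy] by auto
  have x: "x \<in> V" and y: "y \<in> V" and "x \<noteq> y" using xy edge_in_V edge_irrefl by auto
  have fin: "finite ?L" "finite ?N"
    using finite_line[OF L(1)] finite_V by (auto simp: common_nbrs_off_line_def)
  have "nbrs y \<inter> sphere x 1 = (?L - {x, y}) \<union> ?N"
    using line_edge[OF L(1) L(2)] line_edge[OF L(1) L(3)] line_subset_V[OF L(1)]
      gdist_eq_1_iff[OF x] edge_sym edge_irrefl
    by (auto simp: sphere_def common_nbrs_off_line_def)
  then have "real (card ((?L - {x, y}) \<union> ?N)) = ai 1"
    using card_nbrs_in_sphere[OF x y, of 1] gdist_edge[OF xy] by simp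
  moreover have "(?L - {x, y}) \<inter> ?N = {}" by (auto simp: common_nbrs_off_line_def)
  ultimately have "real (card (?L - {x, y})) + real (card ?N) = ai 1"
    using fin card_Un_disjoint[of "?L - {x, y}" ?N] by simp
  moreover have "2 \<le> card ?L" using card_mono[OF fin(1), of "{x, y}"] L \<open>x \<noteq> y\<close> by simp
  then have "real (card (?L - {x, y})) = \<beta> - 1"
    using card_line[OF L(1)] L \<open>x \<noteq> y\<close> fin by (simp add: card_Diff_subset of_nat_diff)
  moreover have "ai 1 = \<beta> - 1 + \<alpha> * (r - 1)"
    using bi_eq[of 1] ci_eq[of 1] k_eq gb_1 D_ge_2 by (simp add: ai_def algebra_simps)
  ultimately show ?thesis by simp
qed

text \<open>The dual Pasch axiom at the edge \<open>u w\<close>, with \<open>w'\<close> and every further neighbour of \<open>w\<close> on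
  \<open>L\<close> as common neighbours of \<open>u\<close> and \<open>w\<close> off their line.\<close>
lemma line_nbrs_subset:
  assumes L: "L \<in> \<C>" "u \<in> L" and w: "w \<notin> L" "E u w" and w': "w' \<notin> L" "E u w'" "E w w'"
    and off: "w' \<notin> line_through \<C> u w"
  shows "{z\<in>L. E w z} \<subseteq> {z\<in>L. E w' z}"
proof
  fix z assume z: "z \<in> {z\<in>L. E w z}"
  show "z \<in> {z\<in>L. E w' z}"
  proof (cases "z = u")
    case True
    then show ?thesis using z w'(2) edge_sym by auto
  next
    case False
    let ?L1 = "line_through \<C> u w"
    have L1: "?L1 \<in> \<C>" "u \<in> ?L1" "w \<in> ?L1" using line_through[OF w(2)] by auto
    have "z \<notin> ?L1" using line_eqI[OF L1(1) L(1) L1(2) _ L(2)] z False L1(3) w(1) by blast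
    then have "z \<in> common_nbrs_off_line u w"
      using z False line_edge[OF L(1) L(2)] line_subset_V[OF L(1)] edge_sym
      by (auto simp: common_nbrs_off_line_def)
    moreover have "w' \<in> common_nbrs_off_line u w"
      using w' off edge_in_V by (auto simp: common_nbrs_off_line_def)
    moreover have "w' \<noteq> z" using z w'(1) by auto
    ultimately have "E w' z"
      using clique_common_nbrs_off_line[OF w(2)] by (simp add: is_clique_def)
    then show ?thesis using z by simp
  qed
qed

lemma line_nbrs_eq:
  assumes xy: "E x y" and w1: "w1 \<in> common_nbrs_off_line x y" and w2: "w2 \<in> common_nbrs_off_line x y"
  shows "{z\<in>line_through \<C> x y. E w1 z} = {z\<in>line_through \<C> x y. E w2 z}"
proof -
  let ?L = "line_through \<C> x y"
  have L: "?L \<in> \<C>" "x \<in> ?L" "y \<in> ?L" using line_through[OF xy] by auto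
  have "{z\<in>?L. E v z} \<subseteq> {z\<in>?L. E v' z}"
    if v: "v \<in> common_nbrs_off_line x y" and v': "v' \<in> common_nbrs_off_line x y" for v v'
  proof (cases "v = v'")
    case False
    have "E v v'" using clique_common_nbrs_off_line[OF xy] v v' False by (simp add: is_clique_def)
    have v_props: "E x v" "E y v" "v \<notin> ?L" "E x v'" "E y v'" "v' \<notin> ?L"
      using v v' by (auto simp: common_nbrs_off_line_def)
    have "v' \<notin> line_through \<C> x v \<or> v' \<notin> line_through \<C> y v"
    proof (rule ccontr)
      assume "\<not> ?thesis"
      then have "line_through \<C> x v = line_through \<C> y v"
        using line_eqI line_through v_props False by metis
      then have "line_through \<C> x v = ?L"
        using line_eqI[OF _ L(1) _ _ L(2,3)] line_through v_props xy edge_irrefl by metis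
      then show False using line_through(3)[of x v] v_props by simp
    qed
    then show ?thesis
      using line_nbrs_subset[OF L(1) L(2) v_props(3) v_props(1) v_props(6) v_props(4) \<open>E v v'\<close>]
        line_nbrs_subset[OF L(1) L(3) v_props(3) v_props(2) v_props(6) v_props(5) \<open>E v v'\<close>]
      by blast
  qed simp
  then show ?thesis using w1 w2 by blast
qed

definition edge_assembly :: "'a \<Rightarrow> 'a \<Rightarrow> 'a \<Rightarrow> 'a set" where
  "edge_assembly x y w = common_nbrs_off_line x y \<union> {z\<in>line_through \<C> x y. E w z}"

lemma edge_assembly_clique:
  assumes xy: "E x y" and w: "w \<in> common_nbrs_off_line x y"
  shows "is_clique V E (edge_assembly x y w)"
proof -
  let ?L = "line_through \<C> x y" and ?N = "common_nbrs_off_line x y"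
  have N: "is_clique V E ?N" by (rule clique_common_nbrs_off_line[OF xy])
  have L: "is_clique V E ?L" using line_clique line_through[OF xy] by blast
  have cross: "E v t" if "v \<in> ?N" "t \<in> {z\<in>?L. E w z}" for v t
    using line_nbrs_eq[OF xy w that(1)] that(2) by blast
  show ?thesis
    unfolding is_clique_def edge_assembly_def
  proof (intro conjI ballI impI)
    show "?N \<union> {z\<in>?L. E w z} \<subseteq> V" using N L by (auto simp: is_clique_def)
  next
    fix u v assume "u \<in> ?N \<union> {z\<in>?L. E w z}" "v \<in> ?N \<union> {z\<in>?L. E w z}" "u \<noteq> v"
    then show "E u v"
    proof (elim UnE)
      assume "u \<in> ?N" "v \<in> ?N" then show ?thesis using N \<open>u \<noteq> v\<close> by (simp add: is_clique_def)
    next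
      assume "u \<in> ?N" "v \<in> {z\<in>?L. E w z}" then show ?thesis by (rule cross)
    next
      assume "u \<in> {z\<in>?L. E w z}" "v \<in> ?N" then show ?thesis using cross edge_sym by blast
    next
      assume "u \<in> {z\<in>?L. E w z}" "v \<in> {z\<in>?L. E w z}"
      then show ?thesis using L \<open>u \<noteq> v\<close> by (simp add: is_clique_def)
    qed
  qed
qed

lemma edge_assembly_is_assembly:
  assumes xy: "E x y" and w: "w \<in> common_nbrs_off_line x y"
  shows "assembly V E \<C> (edge_assembly x y w)"
    and "x \<in> edge_assembly x y w" "y \<in> edge_assembly x y w"
proof -
  let ?L = "line_through \<C> x y" and ?N = "common_nbrs_off_line x y" and ?M = "edge_assembly x y w"
  have L: "?L \<in> \<C>" "x \<in> ?L" "y \<in> ?L" using line_through[OF xy] by auto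
  have w_props: "w \<in> V" "E x w" "E y w" "w \<notin> ?L" using w by (auto simp: common_nbrs_off_line_def)
  show x: "x \<in> ?M" and y: "y \<in> ?M"
    using L w_props edge_sym by (auto simp: edge_assembly_def)
  have "C = ?M" if C: "is_clique V E C" "?M \<subseteq> C" for C
  proof (rule ccontr)
    assume "C \<noteq> ?M"
    then obtain v where v: "v \<in> C" "v \<notin> ?M" using C(2) by blast
    have "w \<in> ?M" using w by (simp add: edge_assembly_def)
    then have "E x v" "E y v" "E w v" "v \<in> V"
      using C x y v by (auto simp: is_clique_def)
    then show False using v(2) by (cases "v \<in> ?L") (auto simp: edge_assembly_def common_nbrs_off_line_def)
  qed
  then have "maximal_clique V E ?M"
    using edge_assembly_clique[OF xy w] by (auto simp: maximal_clique_def)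
  moreover have "?M \<notin> \<C>"
  proof
    assume "?M \<in> \<C>"
    then have "?M = ?L" using line_eqI[OF _ L(1) x y L(2,3)] xy edge_irrefl by blast
    then show False using w_props(4) w by (auto simp: edge_assembly_def)
  qed
  ultimately show "assembly V E \<C> ?M" by (simp add: assembly_def)
qed

lemma assembly_eq_edge_assembly:
  assumes xy: "E x y" and w: "w \<in> common_nbrs_off_line x y"
    and M: "assembly V E \<C> M" "x \<in> M" "y \<in> M"
  shows "M = edge_assembly x y w"
proof -
  let ?L = "line_through \<C> x y" and ?N = "common_nbrs_off_line x y"
  have L: "?L \<in> \<C>" "x \<in> ?L" "y \<in> ?L" using line_through[OF xy] by auto
  have clique: "is_clique V E M" and max: "\<And>C. is_clique V E C \<Longrightarrow> M \<subseteq> C \<Longrightarrow> C = M"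
    and "M \<notin> \<C>"
    using M(1) by (auto simp: assembly_def maximal_clique_def)
  have sub: "M \<subseteq> ?L \<union> ?N"
    using clique M(2,3) L by (auto simp: is_clique_def common_nbrs_off_line_def)
  have "\<not> M \<subseteq> ?L" using max[OF line_clique[OF L(1)]] \<open>M \<notin> \<C>\<close> L(1) by blast
  then obtain w' where w': "w' \<in> M" "w' \<notin> ?L" by blast
  then have "w' \<in> ?N" using sub by blast
  have "v \<in> ?N \<union> {z\<in>?L. E w' z}" if v: "v \<in> M" for v
  proof (cases "v \<in> ?N")
    case False
    then have "v \<in> ?L" "v \<noteq> w'" using sub v w'(2) by auto
    then show ?thesis using clique w'(1) v by (simp add: is_clique_def)
  qed simp
  then have "M \<subseteq> ?N \<union> {z\<in>?L. E w' z}" by blast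
  then have "M \<subseteq> edge_assembly x y w"
    using line_nbrs_eq[OF xy w \<open>w' \<in> ?N\<close>] by (simp add: edge_assembly_def)
  then show ?thesis using max[OF edge_assembly_clique[OF xy w]] by simp
qed

lemma card_edge_assembly:
  assumes xy: "E x y" and w: "w \<in> common_nbrs_off_line x y"
  shows "real (card (edge_assembly x y w)) = \<alpha> * r + 1"
proof -
  let ?L = "line_through \<C> x y" and ?N = "common_nbrs_off_line x y"
  have L: "?L \<in> \<C>" "x \<in> ?L" using line_through[OF xy] by auto
  have w_props: "w \<in> V" "w \<notin> ?L" "E w x" using w edge_sym by (auto simp: common_nbrs_off_line_def)
  have fin: "finite ?N" "finite {z\<in>?L. E w z}"
    using finite_V finite_line[OF L(1)] by (auto simp: common_nbrs_off_line_def)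
  have "?N \<inter> {z\<in>?L. E w z} = {}" by (auto simp: common_nbrs_off_line_def)
  then have "real (card (edge_assembly x y w)) = real (card ?N) + real (card {z\<in>?L. E w z})"
    using fin by (simp add: edge_assembly_def card_Un_disjoint)
  also have "\<dots> = \<alpha> * (r - 1) + (1 + \<alpha>)"
    using card_common_nbrs_off_line[OF xy] card_line_nbrs[OF L(1) w_props(1,2) L(2) w_props(3)]
    by simp
  finally show ?thesis by (simp add: algebra_simps)
qed

lemma common_nbrs_off_line_nonempty:
  assumes "E x y"
  obtains w where "w \<in> common_nbrs_off_line x y"
proof -
  have "0 < real (card (common_nbrs_off_line x y))"
    using card_common_nbrs_off_line[OF assms] \<alpha>_pos r_gt_1 by simp
  then have "common_nbrs_off_line x y \<noteq> {}" by (intro notI) simp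
  then show thesis using that by blast
qed

lemma ex1_assembly:
  assumes "E x y"
  shows "\<exists>!M. assembly V E \<C> M \<and> x \<in> M \<and> y \<in> M"
proof -
  obtain w where w: "w \<in> common_nbrs_off_line x y" using common_nbrs_off_line_nonempty[OF assms] .
  show ?thesis
  proof (rule ex1I[of _ "edge_assembly x y w"])
    show "assembly V E \<C> (edge_assembly x y w) \<and> x \<in> edge_assembly x y w \<and> y \<in> edge_assembly x y w"
      using edge_assembly_is_assembly[OF assms w] by simp
  qed (use assembly_eq_edge_assembly[OF assms w] in blast)
qed

lemma assembly_edge:
  assumes M: "assembly V E \<C> M" and x: "x \<in> M"
  shows "\<exists>y\<in>M. E x y"
proof (rule ccontr)
  assume no_edge: "\<not> (\<exists>y\<in>M. E x y)"
  have "x \<in> V" using assembly_clique[OF M] x by (auto simp: is_clique_def)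
  then obtain y where "E x y" by (rule exists_edge)
  have "M = {x}" using assembly_clique[OF M] x no_edge by (auto simp: is_clique_def)
  moreover have "is_clique V E {x, y}"
    using \<open>E x y\<close> edge_sym edge_in_V by (auto simp: is_clique_def)
  ultimately have "{x, y} = M" using M by (auto simp: assembly_def maximal_clique_def)
  then show False using \<open>M = {x}\<close> \<open>E x y\<close> edge_irrefl by auto
qed

lemma card_assembly:
  assumes M: "assembly V E \<C> M" and x: "x \<in> M"
  shows "real (card M) = \<alpha> * r + 1"
proof -
  obtain y where y: "y \<in> M" "E x y" using assembly_edge[OF M x] by blast
  obtain w where w: "w \<in> common_nbrs_off_line x y"
    using common_nbrs_off_line_nonempty[OF y(2)] .
  show ?thesis
    using assembly_eq_edge_assembly[OF y(2) w M x y(1)] card_edge_assembly[OF y(2) w] by simp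
qed

lemma card_assemblies_through:
  assumes "x \<in> V"
  shows "real (card {M. assembly V E \<C> M \<and> x \<in> M}) = \<beta> / \<alpha>"
proof -
  have "real k = real (card {M \<in> Collect (assembly V E \<C>). x \<in> M}) * (\<alpha> * r)"
    using card_nbrs_by_clique_partition[of "Collect (assembly V E \<C>)" x "\<alpha> * r"]
      assembly_clique ex1_assembly card_assembly card_nbrs[OF assms] by (simp add: add.commute)
  then show ?thesis using k_eq r_gt_1 \<alpha>_pos by (simp add: field_simps)
qed

lemma alpha_r_le_beta: "\<alpha> * r \<le> \<beta>"
proof -
  obtain x where "x \<in> V" using V_ne by blast
  then obtain y where "E x y" by (rule exists_edge)
  then obtain M where "assembly V E \<C> M" "x \<in> M" using ex1_assembly by blast
  then show ?thesis using card_assembly clique_card_le[OF assembly_clique] by fastforce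
qed

end

theorem proposition23:
  fixes V :: "'a set" and E :: "'a \<Rightarrow> 'a \<Rightarrow> bool"
    and bi ci :: "nat \<Rightarrow> nat" and D :: nat and b :: int and \<alpha> \<beta> :: real
    and \<C> :: "'a set set"
  assumes cp: "classical_parameters V E bi ci D b \<alpha> \<beta>"
    and b2: "b \<ge> 2" and \<alpha>1: "1 \<le> \<alpha>" and \<alpha>b: "\<alpha> \<le> real_of_int b - 1"
    and D3: "D \<ge> 3"
    and geo: "geometric V E (bi 0) \<C>"
    and pasch: "dual_pasch V E \<C>"
  shows "(\<forall>x y. E x y \<longrightarrow>
            (\<exists>!M. assembly V E \<C> M \<and> x \<in> M \<and> y \<in> M) \<and>
            (\<forall>M. assembly V E \<C> M \<and> x \<in> M \<and> y \<in> M \<longrightarrow>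
                 real (card M) = \<alpha> * gbr b D + 1))
         \<and> \<beta> \<ge> \<alpha> * gbr b D
         \<and> (\<forall>x\<in>V. real (card {M. assembly V E \<C> M \<and> x \<in> M}) = \<beta> / \<alpha>)"
proof -
  interpret dual_pasch_drg V E bi ci D b \<alpha> \<beta> \<C>
    using cp b2 \<alpha>1 D3 geo pasch
    by unfold_locales (auto simp: classical_parameters_def)
  show ?thesis
    using ex1_assembly card_assembly alpha_r_le_beta card_assemblies_through by blast
qed

end
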